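(* Let $p>1$ and $h\in C[0,\infty)$ with $h(s)>0$ for $s>0$. Assume that the equation $w''+h(s)|w|^{p-1}w=0$ has a solution $w_0$ on $[0,\infty)$ with $w_0(0)=0$ and $w_0(s)>0$ for $s>0$. Then for all sufficiently large $c>0$ the problem \[ w''+h(s)|w|^{p-1}w=0\ (0<s<c),\quad w(0)=w(c)=0,\quad w(s)>0\ (0<s<c), \] has a solution $w_1$ with $w_1'(0)>w_0'(0)$. *)

theory Defs
  imports "HOL-Analysis.Analysis"
begin

definition emden_sol :: "real \<Rightarrow> (real \<Rightarrow> real) \<Rightarrow> real set \<Rightarrow> (real \<Rightarrow> real) \<Rightarrow> (real \<Rightarrow> real) \<Rightarrow> bool" where
  "emden_sol p h I w w' \<longleftrightarrow>
     (\<forall>s\<in>I. (w has_real_derivative w' s) (at s within I) \<and>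
            (w' has_real_derivative (- h s * (\<bar>w s\<bar> powr (p - 1) * w s))) (at s within I))"

end

theory Submission
  imports Defs
begin

text \<open>Shooting. For a slope \<open>a\<close> let \<open>shot a\<close> solve \<open>w'' = - h f(w)\<close>, \<open>w(0) = 0\<close>,
  \<open>w'(0) = a\<close>, where \<open>f\<close> is \<open>x\<^sup>p\<close> truncated to \<open>[0, M]\<close>; it exists on all of \<open>[0, c]\<close>
  by Picard iteration in a weighted norm, is concave, and depends Lipschitz-continuously on \<open>a\<close>.
  By uniqueness \<open>shot (w0' 0) = w0\<close> is positive on \<open>(0, c]\<close>. A steep enough shot vanishes
  before \<open>2\<close>, whatever \<open>c\<close> is: concavity keeps it large on \<open>[1, 3/2]\<close>, where the force
  then bends its slope down by more than is possible for a function that is still positive at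
  \<open>2\<close>. The supremum \<open>a1\<close> of the slopes whose shots stay positive on \<open>(0, c]\<close> gives a shot
  that is nonnegative by continuity in \<open>a\<close>, positive inside \<open>(0, c)\<close> because a concave function
  vanishing at an interior point is negative beyond it, and zero at \<open>c\<close> because positivity on
  \<open>(0, c]\<close> persists under small increases of the slope. Being below \<open>a1 * c \<le> M\<close>, it solves the
  untruncated equation.\<close>

text \<open>Truncation makes the nonlinearity globally Lipschitz; it is invisible to solutions with
  values in \<open>[0, M]\<close>.\<close>

definition trunc_pow :: "real \<Rightarrow> real \<Rightarrow> real \<Rightarrow> real" where
  "trunc_pow p M x = (max 0 (min M x)) powr p"

lemma trunc_pow_nonneg: "0 \<le> trunc_pow p M x"
  by (simp add: trunc_pow_def)

lemma trunc_pow_le: "0 \<le> M \<Longrightarrow> 0 < p \<Longrightarrow> trunc_pow p M x \<le> M powr p"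
  unfolding trunc_pow_def by (intro powr_mono2) auto

lemma trunc_pow_eq: "0 \<le> x \<Longrightarrow> x \<le> M \<Longrightarrow> trunc_pow p M x = x powr p"
  by (simp add: trunc_pow_def)

lemma continuous_on_trunc_pow: "0 < p \<Longrightarrow> continuous_on A (trunc_pow p M)"
  unfolding trunc_pow_def by (intro continuous_on_powr' continuous_intros) auto

lemma trunc_pow_eq_abs_powr: "0 \<le> x \<Longrightarrow> x \<le> M \<Longrightarrow> trunc_pow p M x = \<bar>x\<bar> powr (p - 1) * x"
  using powr_add[of x "p - 1" 1] by (cases "x = 0") (auto simp: trunc_pow_def)

lemma powr_diff_le:
  fixes p M x y :: real
  assumes p: "1 \<le> p" and "0 \<le> y" "y \<le> x" "x \<le> M"
  shows "x powr p - y powr p \<le> p * M powr (p - 1) * (x - y)"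
proof (cases "y = 0")
  case True
  have "x powr p = x powr (p - 1) * x"
    using assms powr_add[of x "p - 1" 1] by (cases "x = 0") auto
  also have "\<dots> \<le> M powr (p - 1) * x"
    using assms by (intro mult_right_mono powr_mono2) auto
  also have "\<dots> \<le> p * M powr (p - 1) * x"
    using assms mult_right_mono[of 1 p "M powr (p - 1)"] by (intro mult_right_mono) auto
  finally show ?thesis using True assms by simp
next
  case False
  show ?thesis
  proof (cases "y = x")
    case False
    with \<open>y \<noteq> 0\<close> assms have "0 < y" "y < x" by auto
    then have "\<exists>z. y < z \<and> z < x \<and> x powr p - y powr p = (x - y) * (p * z powr (p - 1))"
      by (intro MVT2) (auto intro!: has_real_derivative_powr)
    then obtain z where z: "y < z" "z < x" "x powr p - y powr p = (x - y) * (p * z powr (p - 1))"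
      by blast
    have "z powr (p - 1) \<le> M powr (p - 1)"
      using z assms \<open>0 < y\<close> by (intro powr_mono2) auto
    then show ?thesis
      using z assms by (simp add: mult.commute mult_left_mono)
  qed simp
qed

lemma trunc_pow_lipschitz:
  assumes "1 \<le> p" "0 \<le> M"
  shows "(p * M powr (p - 1))-lipschitz_on UNIV (trunc_pow p M)"
proof (rule lipschitz_onI)
  fix x y :: real
  define X Y where "X = max 0 (min M x)" and "Y = max 0 (min M y)"
  have XY: "0 \<le> X" "X \<le> M" "0 \<le> Y" "Y \<le> M"
    using assms by (auto simp: X_def Y_def)
  have "\<bar>X powr p - Y powr p\<bar> \<le> p * M powr (p - 1) * \<bar>X - Y\<bar>"
  proof (cases "Y \<le> X")
    case True
    then have "Y powr p \<le> X powr p"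
      using XY assms by (intro powr_mono2) auto
    then show ?thesis
      using powr_diff_le[of p Y X M] XY True assms by simp
  next
    case False
    then have "X powr p \<le> Y powr p"
      using XY assms by (intro powr_mono2) auto
    then show ?thesis
      using powr_diff_le[of p X Y M] XY False assms by simp
  qed
  also have "\<bar>X - Y\<bar> \<le> \<bar>x - y\<bar>"
    by (auto simp: X_def Y_def abs_if max_def min_def)
  then have "p * M powr (p - 1) * \<bar>X - Y\<bar> \<le> p * M powr (p - 1) * \<bar>x - y\<bar>"
    using assms by (intro mult_left_mono) auto
  finally show "dist (trunc_pow p M x) (trunc_pow p M y) \<le> p * M powr (p - 1) * dist x y"
    by (simp add: trunc_pow_def X_def Y_def dist_real_def)
qed (use assms in simp)

lemma abs_integral_le_exp_bound:
  fixes f :: "real \<Rightarrow> real"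
  assumes lam: "0 < lam" and r: "0 \<le> r" and f: "f integrable_on {0..r}"
    and bound: "\<And>t. t \<in> {0..r} \<Longrightarrow> \<bar>f t\<bar> \<le> K * exp (lam * t)"
  shows "\<bar>integral {0..r} f\<bar> \<le> K * exp (lam * r) / lam"
proof -
  have "\<bar>f 0\<bar> \<le> K"
    using bound[of 0] r by simp
  then have K: "0 \<le> K"
    by linarith
  have "((\<lambda>t. K * exp (lam * t)) has_integral
      (K * exp (lam * r) / lam - K * exp (lam * 0) / lam)) {0..r}"
    using lam r by (intro fundamental_theorem_of_calculus)
      (auto intro!: derivative_eq_intros simp: has_real_derivative_iff_has_vector_derivative[symmetric])
  then have int: "((\<lambda>t. K * exp (lam * t)) has_integral (K * exp (lam * r) - K) / lam) {0..r}"
    by (simp add: diff_divide_distrib)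
  have "\<bar>integral {0..r} f\<bar> \<le> (K * exp (lam * r) - K) / lam"
    using integral_norm_bound_integral[OF f has_integral_integrable[OF int]] bound
      integral_unique[OF int] by simp
  also have "\<dots> \<le> K * exp (lam * r) / lam"
    using K lam by (intro divide_right_mono) auto
  finally show ?thesis .
qed

lemma emden_sol_subset: "emden_sol p h I w w' \<Longrightarrow> J \<subseteq> I \<Longrightarrow> emden_sol p h J w w'"
  unfolding emden_sol_def by (meson has_field_derivative_subset subsetD)

lemma emden_sol_continuous: "emden_sol p h I w w' \<Longrightarrow> continuous_on I w"
  unfolding emden_sol_def by (auto intro: DERIV_continuous_on)

lemma emden_sol_slope_has_integral:
  assumes sol: "emden_sol p h {0..c} w w'" and r: "r \<in> {0..c}"
  shows "((\<lambda>s. h s * (\<bar>w s\<bar> powr (p - 1) * w s)) has_integral (w' 0 - w' r)) {0..r}"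
proof -
  have "((\<lambda>s. - (h s * (\<bar>w s\<bar> powr (p - 1) * w s))) has_integral (w' r - w' 0)) {0..r}"
  proof (rule fundamental_theorem_of_calculus)
    fix s assume "s \<in> {0..r}"
    moreover have "emden_sol p h {0..r} w w'"
      using emden_sol_subset[OF sol] r by simp
    ultimately have "(w' has_real_derivative - h s * (\<bar>w s\<bar> powr (p - 1) * w s)) (at s within {0..r})"
      unfolding emden_sol_def by auto
    then show "(w' has_vector_derivative - (h s * (\<bar>w s\<bar> powr (p - 1) * w s))) (at s within {0..r})"
      by (simp add: has_real_derivative_iff_has_vector_derivative)
  qed (use r in simp)
  from has_integral_neg[OF this] show ?thesis by simp
qed

lemma emden_sol_has_integral:
  assumes sol: "emden_sol p h {0..c} w w'" and "w 0 = 0" and t: "t \<in> {0..c}"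
  shows "(w' has_integral w t) {0..t}"
proof -
  have "(w' has_integral w t - w 0) {0..t}"
  proof (rule fundamental_theorem_of_calculus)
    fix s assume "s \<in> {0..t}"
    moreover have "emden_sol p h {0..t} w w'"
      using emden_sol_subset[OF sol] t by simp
    ultimately have "(w has_real_derivative w' s) (at s within {0..t})"
      unfolding emden_sol_def by auto
    then show "(w has_vector_derivative w' s) (at s within {0..t})"
      by (simp add: has_real_derivative_iff_has_vector_derivative)
  qed (use t in simp)
  with \<open>w 0 = 0\<close> show ?thesis by simp
qed

lemma emden_sol_integral_eq:
  assumes sol: "emden_sol p h {0..c} w w'" and "w 0 = 0" and t: "t \<in> {0..c}"
  shows "w t = w' 0 * t - integral {0..t} (\<lambda>r. integral {0..r} (\<lambda>s. h s * (\<bar>w s\<bar> powr (p - 1) * w s)))"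
proof -
  have "integral {0..t} (\<lambda>r. integral {0..r} (\<lambda>s. h s * (\<bar>w s\<bar> powr (p - 1) * w s)))
      = integral {0..t} (\<lambda>r. w' 0 - w' r)"
    using t by (intro integral_cong integral_unique emden_sol_slope_has_integral[OF sol]) auto
  also have "\<dots> = w' 0 * t - w t"
    using has_integral_diff[OF has_integral_const_real[of "w' 0" 0 t]
        emden_sol_has_integral[OF assms]] t
    by (simp add: integral_unique)
  finally show ?thesis by simp
qed

lemma emden_sol_le_slope:
  assumes sol: "emden_sol p h {0..c} w w'" and "w 0 = 0" and t: "t \<in> {0..c}"
    and h: "\<And>s. s \<in> {0..c} \<Longrightarrow> 0 \<le> h s" and w: "\<And>s. s \<in> {0..c} \<Longrightarrow> 0 \<le> w s"
  shows "w t \<le> w' 0 * t"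
proof -
  have "w' r \<le> w' 0" if "r \<in> {0..c}" for r
    using has_integral_nonneg[OF emden_sol_slope_has_integral[OF sol that]] h w that by simp
  then show ?thesis
    using has_integral_le[OF emden_sol_has_integral[OF assms(1-3)]
        has_integral_const_real[of "w' 0" 0 t]] t
    by (simp add: mult.commute)
qed

locale truncated_emden =
  fixes p c M H :: real and h :: "real \<Rightarrow> real"
  assumes p_ge_1: "1 \<le> p" and c_pos: "0 < c" and M_pos: "0 < M"
    and h_cont: "continuous_on {0..c} h"
    and h_nonneg: "\<And>t. t \<in> {0..c} \<Longrightarrow> 0 \<le> h t"
    and h_le: "\<And>t. t \<in> {0..c} \<Longrightarrow> h t \<le> H"
begin

definition force :: "(real \<Rightarrow> real) \<Rightarrow> real \<Rightarrow> real" where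
  "force w t = h t * trunc_pow p M (w t)"

definition impulse :: "(real \<Rightarrow> real) \<Rightarrow> real \<Rightarrow> real" where
  "impulse w r = integral {0..r} (force w)"

definition picard :: "real \<Rightarrow> (real \<Rightarrow> real) \<Rightarrow> real \<Rightarrow> real" where
  "picard a w s = a * s - integral {0..s} (impulse w)"

lemma H_nonneg: "0 \<le> H"
  using h_nonneg[of 0] h_le[of 0] c_pos by auto

lemma force_nonneg: "t \<in> {0..c} \<Longrightarrow> 0 \<le> force w t"
  unfolding force_def using h_nonneg trunc_pow_nonneg by auto

lemma force_eq_powr: "0 \<le> w t \<Longrightarrow> w t \<le> M \<Longrightarrow> force w t = h t * w t powr p"
  by (simp add: force_def trunc_pow_eq)

lemma force_diff_le:
  assumes t: "t \<in> {0..c}"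
  shows "\<bar>force v t - force w t\<bar> \<le> H * (p * M powr (p - 1)) * \<bar>v t - w t\<bar>"
proof -
  have "\<bar>force v t - force w t\<bar> = h t * \<bar>trunc_pow p M (v t) - trunc_pow p M (w t)\<bar>"
    unfolding force_def using h_nonneg[OF t] by (simp add: abs_mult flip: right_diff_distrib)
  also have "\<dots> \<le> H * (p * M powr (p - 1) * \<bar>v t - w t\<bar>)"
    using lipschitz_onD[OF trunc_pow_lipschitz[OF p_ge_1 less_imp_le[OF M_pos]], of "v t" "w t"]
      h_nonneg[OF t] h_le[OF t]
    unfolding dist_real_def by (intro mult_mono) auto
  finally show ?thesis
    by (simp add: mult.assoc)
qed

lemma force_le: "t \<in> {0..c} \<Longrightarrow> force w t \<le> H * M powr p"
  unfolding force_def using h_nonneg h_le H_nonneg M_pos p_ge_1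
  by (intro mult_mono trunc_pow_le trunc_pow_nonneg) auto

lemma continuous_on_force: "continuous_on {0..c} w \<Longrightarrow> continuous_on {0..c} (force w)"
  unfolding force_def using p_ge_1
  by (intro continuous_intros h_cont continuous_on_compose2[OF continuous_on_trunc_pow]) auto

lemma force_integrable:
  "continuous_on {0..c} w \<Longrightarrow> 0 \<le> x \<Longrightarrow> r \<le> c \<Longrightarrow> force w integrable_on {x..r}"
  by (rule integrable_on_subinterval[OF integrable_continuous_real[OF continuous_on_force]]) auto

lemma impulse_has_derivative:
  "continuous_on {0..c} w \<Longrightarrow> r \<in> {0..c} \<Longrightarrow>
    (impulse w has_real_derivative force w r) (at r within {0..c})"
  unfolding impulse_def by (rule integral_has_real_derivative[OF continuous_on_force])

lemma continuous_on_impulse: "continuous_on {0..c} w \<Longrightarrow> continuous_on {0..c} (impulse w)"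
  by (rule DERIV_continuous_on[OF impulse_has_derivative])

lemma impulse_integrable:
  "continuous_on {0..c} w \<Longrightarrow> 0 \<le> x \<Longrightarrow> r \<le> c \<Longrightarrow> impulse w integrable_on {x..r}"
  by (rule integrable_on_subinterval[OF integrable_continuous_real[OF continuous_on_impulse]]) auto

lemma picard_has_derivative:
  assumes "continuous_on {0..c} w" "s \<in> {0..c}"
  shows "(picard a w has_real_derivative (a - impulse w s)) (at s within {0..c})"
  unfolding picard_def
  using integral_has_real_derivative[OF continuous_on_impulse[OF assms(1)] assms(2)]
  by (auto intro!: derivative_eq_intros)

lemma continuous_on_picard: "continuous_on {0..c} w \<Longrightarrow> continuous_on {0..c} (picard a w)"
  by (rule DERIV_continuous_on[OF picard_has_derivative])

lemma impulse_nonneg: "continuous_on {0..c} w \<Longrightarrow> r \<in> {0..c} \<Longrightarrow> 0 \<le> impulse w r"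
  unfolding impulse_def by (rule integral_nonneg[OF force_integrable]) (auto intro: force_nonneg)

lemma impulse_diff:
  assumes "continuous_on {0..c} w" "0 \<le> x" "x \<le> y" "y \<le> c"
  shows "impulse w y - impulse w x = integral {x..y} (force w)"
  using Henstock_Kurzweil_Integration.integral_combine[OF assms(2,3)
      force_integrable[OF assms(1) order_refl assms(4)]] assms
  unfolding impulse_def by simp

lemma impulse_mono:
  assumes "continuous_on {0..c} w" "0 \<le> x" "x \<le> y" "y \<le> c"
  shows "impulse w x \<le> impulse w y"
  using integral_nonneg[OF force_integrable[OF assms(1,2,4)]] force_nonneg assms
    impulse_diff[OF assms] by auto

lemma picard_diff:
  assumes "continuous_on {0..c} w" "0 \<le> x" "x \<le> y" "y \<le> c"
  shows "picard a w y - picard a w x = a * (y - x) - integral {x..y} (impulse w)"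
  using Henstock_Kurzweil_Integration.integral_combine[OF assms(2,3)
      impulse_integrable[OF assms(1) order_refl assms(4)]] assms
  unfolding picard_def by (simp add: algebra_simps)

lemma picard_cong:
  "(\<And>t. t \<in> {0..c} \<Longrightarrow> v t = w t) \<Longrightarrow> s \<in> {0..c} \<Longrightarrow> picard a v s = picard a w s"
  unfolding picard_def impulse_def force_def
  by (intro arg_cong2[where f = "(-)"] refl integral_cong) auto

text \<open>Bielecki's trick: measured with the weight \<open>exp (weight_rate * t)\<close>, the Picard operator
  is a contraction with constant 1/2 on the whole interval \<open>[0, c]\<close>, however large \<open>c\<close> is.\<close>

definition weight_rate :: real where
  "weight_rate = sqrt (2 * H * (p * M powr (p - 1)) + 1)"

lemma weight_rate_pos: "0 < weight_rate"
  using H_nonneg p_ge_1 unfolding weight_rate_def by (simp add: add_nonneg_pos)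

lemma weight_rate_bound: "H * (p * M powr (p - 1)) \<le> weight_rate\<^sup>2 / 2"
  using H_nonneg p_ge_1 unfolding weight_rate_def by simp

lemma picard_weighted_contraction:
  assumes v: "continuous_on {0..c} v" and w: "continuous_on {0..c} w"
    and B: "\<And>t. t \<in> {0..c} \<Longrightarrow> \<bar>v t - w t\<bar> \<le> B * exp (weight_rate * t)"
    and s: "s \<in> {0..c}"
  shows "\<bar>picard a v s - picard a w s\<bar> \<le> B / 2 * exp (weight_rate * s)"
proof -
  define L where "L = p * M powr (p - 1)"
  define lam where "lam = weight_rate"
  have lam: "0 < lam" "H * L \<le> lam\<^sup>2 / 2"
    using weight_rate_pos weight_rate_bound by (simp_all add: lam_def L_def)
  have L: "0 \<le> L"
    using p_ge_1 by (simp add: L_def)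
  have "0 \<le> B"
    using B[of 0] c_pos by (auto intro: order_trans[OF abs_ge_zero])
  have force_gap: "\<bar>force v t - force w t\<bar> \<le> H * L * B * exp (lam * t)" if t: "t \<in> {0..c}" for t
  proof -
    have "H * L * \<bar>v t - w t\<bar> \<le> H * L * (B * exp (lam * t))"
      using B[OF t] H_nonneg L by (intro mult_left_mono) (auto simp: lam_def)
    then show ?thesis
      using force_diff_le[OF t, of v w] by (simp add: L_def mult.assoc)
  qed
  have impulse_gap: "\<bar>impulse v r - impulse w r\<bar> \<le> H * L * B / lam * exp (lam * r)"
    if r: "r \<in> {0..c}" for r
  proof -
    have "impulse v r - impulse w r = integral {0..r} (\<lambda>t. force v t - force w t)"
      unfolding impulse_def using r by (intro integral_diff[symmetric] force_integrable v w) auto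
    also have "\<bar>\<dots>\<bar> \<le> H * L * B * exp (lam * r) / lam"
      using r force_gap lam(1)
      by (intro abs_integral_le_exp_bound integrable_diff force_integrable v w) auto
    finally show ?thesis by simp
  qed
  have "picard a v s - picard a w s = - integral {0..s} (\<lambda>r. impulse v r - impulse w r)"
    unfolding picard_def using s by (subst integral_diff) (auto intro: impulse_integrable v w)
  then have "\<bar>picard a v s - picard a w s\<bar> \<le> H * L * B / lam * exp (lam * s) / lam"
    using s impulse_gap lam(1)
    by (simp only: abs_minus_cancel)
      (intro abs_integral_le_exp_bound integrable_diff impulse_integrable v w, auto)
  also have "\<dots> = (H * L) * B * exp (lam * s) / lam\<^sup>2"
    by (simp add: power2_eq_square)
  also have "\<dots> \<le> (lam\<^sup>2 / 2) * B * exp (lam * s) / lam\<^sup>2"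
    using lam \<open>0 \<le> B\<close> by (intro divide_right_mono mult_right_mono) auto
  also have "\<dots> = B / 2 * exp (lam * s)"
    using lam by (simp add: field_simps)
  finally show ?thesis
    by (simp add: lam_def)
qed

text \<open>The weighted functions live in the Banach space of bounded continuous functions on the
  real line; \<open>weight\<close> extends a function on \<open>[0, c]\<close> by its values at the endpoints.\<close>

definition interval_proj :: "real \<Rightarrow> real" where
  "interval_proj x = max 0 (min c x)"

definition weight :: "(real \<Rightarrow> real) \<Rightarrow> (real \<Rightarrow>\<^sub>C real)" where
  "weight w = Bcontfun (\<lambda>x. exp (- (weight_rate * interval_proj x)) * w (interval_proj x))"

definition unweight :: "(real \<Rightarrow>\<^sub>C real) \<Rightarrow> real \<Rightarrow> real" where
  "unweight z t = exp (weight_rate * t) * z t"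

definition weighted_picard :: "real \<Rightarrow> (real \<Rightarrow>\<^sub>C real) \<Rightarrow> (real \<Rightarrow>\<^sub>C real)" where
  "weighted_picard a z = weight (picard a (unweight z))"

lemma interval_proj_in: "interval_proj x \<in> {0..c}"
  using c_pos by (auto simp: interval_proj_def)

lemma interval_proj_id: "x \<in> {0..c} \<Longrightarrow> interval_proj x = x"
  by (auto simp: interval_proj_def)

lemma interval_proj_comp_bcontfun:
  assumes "continuous_on {0..c} f"
  shows "(\<lambda>x. f (interval_proj x)) \<in> bcontfun"
proof -
  have "continuous_on UNIV (\<lambda>x. f (interval_proj x))"
    unfolding interval_proj_def using interval_proj_in
    by (intro continuous_on_compose2[OF assms] continuous_intros) (auto simp: interval_proj_def)
  moreover have "bounded (range (\<lambda>x. f (interval_proj x)))"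
    using interval_proj_in
    by (intro bounded_subset[OF compact_imp_bounded[OF compact_continuous_image[OF assms]]]) auto
  ultimately show ?thesis
    by (simp add: bcontfun_def)
qed

lemma weight_apply:
  assumes "continuous_on {0..c} w"
  shows "weight w x = exp (- (weight_rate * interval_proj x)) * w (interval_proj x)"
proof -
  have "(\<lambda>x. exp (- (weight_rate * interval_proj x)) * w (interval_proj x)) \<in> bcontfun"
    using interval_proj_comp_bcontfun[of "\<lambda>t. exp (- (weight_rate * t)) * w t"] assms
    by (simp add: continuous_intros)
  then show ?thesis
    by (simp add: weight_def Bcontfun_inverse)
qed

lemma weight_cong:
  assumes "\<And>t. t \<in> {0..c} \<Longrightarrow> v t = w t"
  shows "weight v = weight w"
proof -
  have "v (interval_proj x) = w (interval_proj x)" for x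
    using assms interval_proj_in by blast
  then show ?thesis
    by (simp add: weight_def)
qed

lemma continuous_on_unweight: "continuous_on S (unweight z)"
  unfolding unweight_def by (intro continuous_intros) auto

lemma unweight_weight: "continuous_on {0..c} w \<Longrightarrow> t \<in> {0..c} \<Longrightarrow> unweight (weight w) t = w t"
  by (simp add: unweight_def weight_apply interval_proj_id exp_minus)

lemma weighted_picard_apply:
  "weighted_picard a z x = exp (- (weight_rate * interval_proj x)) * picard a (unweight z) (interval_proj x)"
  unfolding weighted_picard_def by (intro weight_apply continuous_on_picard continuous_on_unweight)

lemma unweight_dist: "\<bar>unweight y t - unweight z t\<bar> = exp (weight_rate * t) * dist (y t) (z t)"
  by (simp add: unweight_def dist_real_def abs_mult flip: right_diff_distrib)

lemma weighted_picard_contraction: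
  "dist (weighted_picard a y) (weighted_picard a z) \<le> 1/2 * dist y z"
proof (rule dist_bound)
  fix x
  define s where "s = interval_proj x"
  have s: "s \<in> {0..c}"
    using interval_proj_in by (simp add: s_def)
  have "\<bar>unweight y t - unweight z t\<bar> \<le> dist y z * exp (weight_rate * t)" for t
    using dist_bounded[of y t z] unfolding unweight_dist by (simp add: mult.commute)
  then have "\<bar>picard a (unweight y) s - picard a (unweight z) s\<bar> \<le> dist y z / 2 * exp (weight_rate * s)"
    by (intro picard_weighted_contraction continuous_on_unweight s)
  then show "dist (weighted_picard a y x) (weighted_picard a z x) \<le> 1/2 * dist y z"
    unfolding weighted_picard_apply dist_real_def s_def[symmetric]
    by (simp add: abs_mult right_diff_distrib[symmetric] exp_minus field_simps)
qed

lemma weighted_picard_slope_lipschitz: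
  "dist (weighted_picard a z) (weighted_picard b z) \<le> c * \<bar>a - b\<bar>"
proof (rule dist_bound)
  fix x
  define s where "s = interval_proj x"
  have s: "s \<in> {0..c}"
    using interval_proj_in by (simp add: s_def)
  have "weighted_picard a z x - weighted_picard b z x = exp (- (weight_rate * s)) * ((a - b) * s)"
    unfolding weighted_picard_apply picard_def s_def[symmetric] by (simp add: algebra_simps)
  then have "\<bar>weighted_picard a z x - weighted_picard b z x\<bar> = exp (- (weight_rate * s)) * (\<bar>a - b\<bar> * s)"
    using s by (simp add: abs_mult)
  also have "\<dots> \<le> 1 * (\<bar>a - b\<bar> * c)"
    using s weight_rate_pos by (intro mult_mono mult_left_mono) auto
  finally show "dist (weighted_picard a z x) (weighted_picard b z x) \<le> c * \<bar>a - b\<bar>"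
    by (simp add: dist_real_def mult.commute)
qed

lemma weighted_picard_ex1_fixpoint: "\<exists>!z. weighted_picard a z = z"
  using weighted_picard_contraction by (intro banach_fix_type[of "1/2"]) auto

definition weighted_fix :: "real \<Rightarrow> (real \<Rightarrow>\<^sub>C real)" where
  "weighted_fix a = (THE z. weighted_picard a z = z)"

definition shot :: "real \<Rightarrow> real \<Rightarrow> real" where
  "shot a = unweight (weighted_fix a)"

definition shot' :: "real \<Rightarrow> real \<Rightarrow> real" where
  "shot' a s = a - impulse (shot a) s"

lemma weighted_fix_eq: "weighted_picard a (weighted_fix a) = weighted_fix a"
  unfolding weighted_fix_def by (rule theI'[OF weighted_picard_ex1_fixpoint])

lemma weighted_fix_unique: "weighted_picard a z = z \<Longrightarrow> weighted_fix a = z"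
  using weighted_picard_ex1_fixpoint weighted_fix_eq by blast

lemma weighted_fix_lipschitz: "(2 * c)-lipschitz_on UNIV weighted_fix"
proof (rule lipschitz_onI)
  fix a b
  have "dist (weighted_fix a) (weighted_fix b)
      = dist (weighted_picard a (weighted_fix a)) (weighted_picard b (weighted_fix b))"
    using weighted_fix_eq by simp
  also have "\<dots> \<le> dist (weighted_picard a (weighted_fix a)) (weighted_picard b (weighted_fix a))
                + dist (weighted_picard b (weighted_fix a)) (weighted_picard b (weighted_fix b))"
    by (rule dist_triangle)
  also have "\<dots> \<le> c * \<bar>a - b\<bar> + 1/2 * dist (weighted_fix a) (weighted_fix b)"
    using weighted_picard_slope_lipschitz weighted_picard_contraction by (intro add_mono)
  finally show "dist (weighted_fix a) (weighted_fix b) \<le> 2 * c * dist a b"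
    by (simp add: dist_real_def)
qed (use c_pos in simp)

lemma continuous_on_shot: "continuous_on S (shot a)"
  unfolding shot_def by (rule continuous_on_unweight)

lemma shot_eq_picard:
  assumes "t \<in> {0..c}"
  shows "shot a t = picard a (shot a) t"
proof -
  have "weighted_fix a = weight (picard a (shot a))"
    using weighted_fix_eq[of a] by (simp add: weighted_picard_def shot_def)
  then show ?thesis
    using unweight_weight[OF continuous_on_picard[OF continuous_on_shot[of _ a]] assms, of a]
    by (simp add: shot_def)
qed

lemma shot_slope_lipschitz:
  assumes "t \<in> {0..c}"
  shows "(exp (weight_rate * c) * (2 * c))-lipschitz_on UNIV (\<lambda>a. shot a t)"
proof (rule lipschitz_onI)
  fix a b
  have "dist (shot a t) (shot b t) = exp (weight_rate * t) * dist (weighted_fix a t) (weighted_fix b t)"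
    unfolding shot_def dist_real_def[of "unweight _ t"] unweight_dist ..
  also have "\<dots> \<le> exp (weight_rate * c) * (2 * c * dist a b)"
    using assms weight_rate_pos dist_bounded[of "weighted_fix a" t "weighted_fix b"]
      lipschitz_onD[OF weighted_fix_lipschitz, of a b]
    by (intro mult_mono) auto
  finally show "dist (shot a t) (shot b t) \<le> exp (weight_rate * c) * (2 * c) * dist a b"
    by simp
qed (use c_pos in simp)

lemma shot_unique:
  assumes w: "continuous_on {0..c} w" and eq: "\<And>t. t \<in> {0..c} \<Longrightarrow> w t = picard a w t"
    and t: "t \<in> {0..c}"
  shows "shot a t = w t"
proof -
  have "picard a (unweight (weight w)) t = w t" if "t \<in> {0..c}" for t
    using picard_cong[OF unweight_weight[OF w] that] eq[OF that] by simp
  then have "weighted_picard a (weight w) = weight w"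
    unfolding weighted_picard_def by (rule weight_cong)
  then show ?thesis
    using weighted_fix_unique unweight_weight[OF w t] unfolding shot_def by simp
qed

lemma shot_has_derivative:
  "s \<in> {0..c} \<Longrightarrow> (shot a has_real_derivative shot' a s) (at s within {0..c})"
  unfolding shot'_def
  by (rule has_field_derivative_transform_within[OF picard_has_derivative[OF continuous_on_shot]
        zero_less_one]) (simp_all add: shot_eq_picard)

lemma shot'_has_derivative:
  "s \<in> {0..c} \<Longrightarrow> (shot' a has_real_derivative - force (shot a) s) (at s within {0..c})"
  unfolding shot'_def
  using impulse_has_derivative[OF continuous_on_shot] by (auto intro!: derivative_eq_intros)

lemma shot_0: "shot a 0 = 0"
  using shot_eq_picard[of 0 a] c_pos by (simp add: picard_def)

lemma shot'_0: "shot' a 0 = a"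
  by (simp add: shot'_def impulse_def)

lemma shot'_le_slope: "s \<in> {0..c} \<Longrightarrow> shot' a s \<le> a"
  unfolding shot'_def using impulse_nonneg[OF continuous_on_shot] by auto

lemma shot_le_slope:
  assumes "t \<in> {0..c}"
  shows "shot a t \<le> a * t"
proof -
  have "0 \<le> integral {0..t} (impulse (shot a))"
    using assms by (intro integral_nonneg impulse_integrable impulse_nonneg continuous_on_shot) auto
  then show ?thesis
    using shot_eq_picard[OF assms] by (simp add: picard_def)
qed

lemma shot_chord_le:
  assumes "0 \<le> x" "x \<le> y" "y \<le> c"
  shows "shot a y - shot a x \<le> shot' a x * (y - x)"
proof -
  have "integral {x..y} (\<lambda>r. impulse (shot a) x) \<le> integral {x..y} (impulse (shot a))"
    using assms by (intro integral_le impulse_integrable impulse_mono continuous_on_shot) auto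
  then show ?thesis
    using picard_diff[OF continuous_on_shot assms, of a a] shot_eq_picard[of x a] shot_eq_picard[of y a]
      assms by (simp add: shot'_def algebra_simps)
qed

lemma shot_chord_ge:
  assumes "0 \<le> x" "x \<le> y" "y \<le> c"
  shows "shot' a y * (y - x) \<le> shot a y - shot a x"
proof -
  have "integral {x..y} (impulse (shot a)) \<le> integral {x..y} (\<lambda>r. impulse (shot a) y)"
    using assms by (intro integral_le impulse_integrable impulse_mono continuous_on_shot) auto
  then show ?thesis
    using picard_diff[OF continuous_on_shot assms, of a a] shot_eq_picard[of x a] shot_eq_picard[of y a]
      assms by (simp add: shot'_def algebra_simps)
qed

lemma shot_neg_after_zero:
  assumes "0 \<le> r" "r < t" "t < s" "s \<le> c" "0 < shot a r" "shot a t = 0"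
  shows "shot a s < 0"
proof -
  have "shot' a t * (t - r) < 0"
    using shot_chord_ge[of r t a] assms by simp
  then have "shot' a t < 0"
    using assms by (simp add: mult_less_0_iff)
  then show ?thesis
    using shot_chord_le[of t s a] assms mult_neg_pos[of "shot' a t" "s - t"] by simp
qed

lemma shot_secant_ratio_mono:
  assumes "0 \<le> s" "s \<le> t" "t < z" "z \<le> c" "0 \<le> shot a z"
  shows "shot a s * (z - t) \<le> shot a t * (z - s)"
proof -
  have "- shot a t * (t - s) \<le> shot' a t * (z - t) * (t - s)"
    using shot_chord_le[of t z a] assms by (intro mult_right_mono) auto
  also have "\<dots> \<le> (shot a t - shot a s) * (z - t)"
    using shot_chord_ge[of s t a] assms by (simp add: mult.commute mult.left_commute mult_left_mono)
  finally show ?thesis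
    by (simp add: algebra_simps)
qed

lemma shot_ge_half_slope:
  assumes x: "x \<in> {0..c}" and F: "\<And>t. t \<in> {0..x} \<Longrightarrow> force (shot a) t \<le> F"
    and small: "x * F \<le> a / 2"
  shows "a * x / 2 \<le> shot a x"
proof -
  have "impulse (shot a) x \<le> integral {0..x} (\<lambda>t. F)"
    unfolding impulse_def using x F by (intro integral_le force_integrable continuous_on_shot) auto
  then have "a / 2 \<le> shot' a x"
    using x small by (simp add: shot'_def)
  then have "a / 2 * x \<le> shot' a x * x"
    using x by (intro mult_right_mono) auto
  then show ?thesis
    using shot_chord_ge[of 0 x a] x by (simp add: shot_0)
qed

lemma shot_pos_near_zero:
  assumes "0 < b"
  obtains d where "0 < d" "d \<le> c" "\<And>a x. b \<le> a \<Longrightarrow> 0 < x \<Longrightarrow> x \<le> d \<Longrightarrow> 0 < shot a x"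
proof
  define U where "U = H * M powr p"
  have U: "0 \<le> U"
    using H_nonneg by (simp add: U_def)
  define d where "d = min c (b / (2 * (U + 1)))"
  show "0 < d" "d \<le> c"
    using c_pos assms U by (simp_all add: d_def)
  have "d * U \<le> b / (2 * (U + 1)) * (U + 1)"
    using assms U by (intro mult_mono) (auto simp: d_def)
  also have "\<dots> = b / 2"
    using U by (simp add: field_simps)
  finally have dU: "d * U \<le> b / 2" .
  fix a x assume "b \<le> a" "0 < x" "x \<le> d"
  moreover have "x * U \<le> d * U"
    using \<open>x \<le> d\<close> U by (intro mult_right_mono)
  ultimately have "a * x / 2 \<le> shot a x"
    using dU force_le \<open>d \<le> c\<close> unfolding U_def
    by (intro shot_ge_half_slope[where F = "H * M powr p"]) auto
  moreover have "0 < a * x"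
    using \<open>0 < b\<close> \<open>b \<le> a\<close> \<open>0 < x\<close> by simp
  ultimately show "0 < shot a x"
    by linarith
qed

lemma shot_pos_eventually:
  assumes b: "0 < b" and pos: "\<And>t. t \<in> {0<..c} \<Longrightarrow> 0 < shot b t"
  shows "\<forall>\<^sub>F a in at_right b. \<forall>t\<in>{0<..c}. 0 < shot a t"
proof -
  obtain d where d: "0 < d" "d \<le> c" "\<And>a x. b \<le> a \<Longrightarrow> 0 < x \<Longrightarrow> x \<le> d \<Longrightarrow> 0 < shot a x"
    using shot_pos_near_zero[OF b] by blast
  obtain x where x: "x \<in> {d..c}" "\<And>y. y \<in> {d..c} \<Longrightarrow> shot b x \<le> shot b y"
    using continuous_attains_inf[of "{d..c}" "shot b"] d continuous_on_shot by auto
  define K where "K = exp (weight_rate * c) * (2 * c)"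
  have "0 < shot b x" "0 < K"
    using pos x d c_pos by (auto simp: K_def)
  show ?thesis
  proof (rule eventually_at_rightI)
    fix a assume a: "a \<in> {b<..<b + shot b x / K}"
    show "\<forall>t\<in>{0<..c}. 0 < shot a t"
    proof
      fix t assume t: "t \<in> {0<..c}"
      show "0 < shot a t"
      proof (cases "t \<le> d")
        case False
        have "\<bar>shot a t - shot b t\<bar> \<le> K * \<bar>a - b\<bar>"
          using lipschitz_onD[OF shot_slope_lipschitz, of t a b] t by (simp add: K_def dist_real_def)
        also have "\<dots> < K * (shot b x / K)"
          using a \<open>0 < K\<close> by (intro mult_strict_left_mono) auto
        also have "\<dots> = shot b x"
          using \<open>0 < K\<close> by simp
        moreover have "shot b x \<le> shot b t"
          using x(2)[of t] False t by simp
        ultimately show ?thesis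
          by linarith
      qed (use a t d(3)[of a t] in simp)
    qed
  qed (use \<open>0 < shot b x\<close> \<open>0 < K\<close> in simp)
qed

lemma impulse_increment_lt:
  assumes "2 \<le> c" "0 < shot a 2"
  shows "impulse (shot a) (3/2) - impulse (shot a) 1 < 4 * a"
proof -
  have "shot a 2 - shot a (3/2) \<le> shot' a (3/2) * (2 - 3/2)"
    using assms by (intro shot_chord_le) auto
  moreover have "shot a (3/2) \<le> a * (3/2)"
    using shot_le_slope[of "3/2" a] assms by simp
  moreover have "shot' a 1 \<le> a"
    using shot'_le_slope[of 1 a] assms by simp
  ultimately show ?thesis
    using assms by (simp add: shot'_def)
qed

lemma shot_lower_bound_middle:
  assumes c: "2 \<le> c" and s: "0 < s" "s \<le> 1" and "0 \<le> shot a 2"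
    and b: "0 \<le> b" "b \<le> shot a s" and t: "t \<in> {1..3/2}"
  shows "b / 4 \<le> shot a t"
proof -
  have "b * (1/2) \<le> shot a s * (2 - t)"
    using b t by (intro mult_mono) auto
  also have "\<dots> \<le> shot a t * (2 - s)"
    using assms by (intro shot_secant_ratio_mono) auto
  finally have *: "b / 2 \<le> shot a t * (2 - s)"
    by simp
  have "0 \<le> shot a t"
  proof (rule ccontr)
    assume "\<not> 0 \<le> shot a t"
    then have "shot a t * (2 - s) < 0"
      using s by (intro mult_neg_pos) auto
    with * b show False
      by linarith
  qed
  then have "shot a t * (2 - s) \<le> shot a t * 2"
    using s by (intro mult_left_mono) auto
  with * show ?thesis
    by simp
qed

text \<open>If a shot with slope \<open>a\<close> stayed positive on \<open>(0, 2]\<close>, it would reach \<open>a s / 2\<close> at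
  \<open>s\<close> (the force being small on \<open>[0, s]\<close>), hence by concavity exceed \<open>a s / 8\<close> on \<open>[1, 3/2]\<close>,
  and the force there would produce more impulse than \<open>impulse_increment_lt\<close> allows.\<close>

lemma shot_vanishes_for_large_slope:
  assumes c: "2 \<le> c" and m: "\<And>t. t \<in> {1..3/2} \<Longrightarrow> m \<le> h t"
    and H': "\<And>t. t \<in> {0..1} \<Longrightarrow> h t \<le> H'"
    and a: "0 < a" "2 * a \<le> M" and s: "0 < s" "s \<le> 1"
    and small: "H' * a powr (p - 1) * s powr (p + 1) \<le> 1/2"
    and large: "8 * a < m * (a * s / 8) powr p"
  shows "\<exists>t\<in>{0<..2}. shot a t \<le> 0"
proof (rule ccontr)
  assume "\<not> ?thesis"
  then have pos: "\<And>t. t \<in> {0<..2} \<Longrightarrow> 0 < shot a t"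
    by force
  have shot_bounds: "0 \<le> shot a t" "shot a t \<le> a * x" if "t \<in> {0..x}" "x \<le> 2" for t x
  proof -
    show "0 \<le> shot a t"
      using pos[of t] that shot_0 by (cases "t = 0") auto
    have "a * t \<le> a * x"
      using that a by (intro mult_left_mono) auto
    then show "shot a t \<le> a * x"
      using shot_le_slope[of t a] that c by auto
  qed
  have force_eq: "force (shot a) t = h t * shot a t powr p" if "t \<in> {0..2}" for t
    using shot_bounds[OF that order_refl] a by (intro force_eq_powr) auto
  have "a * s / 2 \<le> shot a s"
  proof (rule shot_ge_half_slope[where F = "H' * (a * s) powr p"])
    fix t assume t: "t \<in> {0..s}"
    have "shot a t powr p \<le> (a * s) powr p"
      using shot_bounds[OF t] s p_ge_1 by (intro powr_mono2) auto
    moreover have "0 \<le> h t" "h t \<le> H'"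
      using h_nonneg[of t] H'[of t] t s c by auto
    ultimately show "force (shot a) t \<le> H' * (a * s) powr p"
      using force_eq[of t] t s by (simp add: mult_mono)
  next
    have "(a * s) powr p = a powr (p - 1) * a * s powr p"
      using a s by (simp add: powr_mult powr_diff)
    moreover have "s powr (p + 1) = s powr p * s"
      using s by (simp add: powr_add)
    ultimately have "s * (H' * (a * s) powr p) = a * (H' * a powr (p - 1) * s powr (p + 1))"
      by (simp add: algebra_simps)
    also have "\<dots> \<le> a * (1/2)"
      using small a by (intro mult_left_mono) auto
    finally show "s * (H' * (a * s) powr p) \<le> a / 2"
      by simp
  qed (use s c in auto)
  then have lower: "a * s / 8 \<le> shot a t" if "t \<in> {1..3/2}" for t
    using shot_lower_bound_middle[OF c s, where a = a and b = "a * s / 2", OF _ _ _ that] pos[of 2] a s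
    by simp
  have "integral {1..3/2::real} (\<lambda>t. m * (a * s / 8) powr p) \<le> integral {1..3/2} (force (shot a))"
  proof (rule integral_le)
    show "force (shot a) integrable_on {1..3/2}"
      using c by (intro force_integrable continuous_on_shot) auto
    fix t :: real assume t: "t \<in> {1..3/2}"
    have "(a * s / 8) powr p \<le> shot a t powr p"
      using lower[OF t] a s p_ge_1 by (intro powr_mono2) auto
    then show "m * (a * s / 8) powr p \<le> force (shot a) t"
      using force_eq[of t] m[OF t] h_nonneg[of t] t c by (simp add: mult_mono)
  qed (intro integrable_continuous_real continuous_on_const)
  then have "m * (a * s / 8) powr p / 2 \<le> impulse (shot a) (3/2) - impulse (shot a) 1"
    using impulse_diff[OF continuous_on_shot, of 1 "3/2" a] c by simp
  then show False
    using impulse_increment_lt[of a] pos[of 2] large c by simp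
qed

lemma shot_emden_sol:
  assumes "\<And>t. t \<in> {0..c} \<Longrightarrow> 0 \<le> shot a t \<and> shot a t \<le> M"
  shows "emden_sol p h {0..c} (shot a) (shot' a)"
  unfolding emden_sol_def
proof
  fix s assume s: "s \<in> {0..c}"
  have "force (shot a) s = h s * (\<bar>shot a s\<bar> powr (p - 1) * shot a s)"
    using assms[OF s] by (simp add: force_def trunc_pow_eq_abs_powr)
  then show "(shot a has_real_derivative shot' a s) (at s within {0..c}) \<and>
      (shot' a has_real_derivative - h s * (\<bar>shot a s\<bar> powr (p - 1) * shot a s)) (at s within {0..c})"
    using shot_has_derivative[OF s] shot'_has_derivative[OF s, of a] by simp
qed

lemma shot_eq_emden_sol:
  assumes sol: "emden_sol p h {0..c} w w'" and "w 0 = 0"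
    and w: "\<And>t. t \<in> {0..c} \<Longrightarrow> 0 \<le> w t \<and> w t \<le> M" and t: "t \<in> {0..c}"
  shows "shot (w' 0) t = w t"
proof (rule shot_unique[OF emden_sol_continuous[OF sol] _ t])
  fix t assume t: "t \<in> {0..c}"
  have "impulse w r = integral {0..r} (\<lambda>s. h s * (\<bar>w s\<bar> powr (p - 1) * w s))" if "r \<in> {0..t}" for r
    unfolding impulse_def force_def using w that t
    by (intro integral_cong) (simp add: trunc_pow_eq_abs_powr)
  then have "integral {0..t} (impulse w)
      = integral {0..t} (\<lambda>r. integral {0..r} (\<lambda>s. h s * (\<bar>w s\<bar> powr (p - 1) * w s)))"
    by (rule integral_cong)
  then show "w t = picard (w' 0) w t"
    using emden_sol_integral_eq[OF sol \<open>w 0 = 0\<close> t] by (simp add: picard_def)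
qed

lemma shot_Sup_nonneg:
  assumes "S \<noteq> {}" "bdd_above S" and pos: "\<And>a t. a \<in> S \<Longrightarrow> t \<in> {0<..c} \<Longrightarrow> 0 < shot a t"
    and t: "t \<in> {0..c}"
  shows "0 \<le> shot (Sup S) t"
proof (rule continuous_ge_on_closure[where f = "\<lambda>a. shot a t" and x = "Sup S"])
  show "continuous_on (closure S) (\<lambda>a. shot a t)"
    by (rule lipschitz_on_continuous_on[OF lipschitz_on_subset[OF shot_slope_lipschitz[OF t]]]) auto
  show "Sup S \<in> closure S"
    using assms by (intro closure_contains_Sup)
  show "0 \<le> shot a t" if "a \<in> S" for a
    using pos[OF that, of t] t shot_0 by (cases "t = 0") auto
qed

lemma shot_pos_of_nonneg:
  assumes a: "0 < a" and nonneg: "\<And>t. t \<in> {0..c} \<Longrightarrow> 0 \<le> shot a t" and t: "t \<in> {0<..<c}"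
  shows "0 < shot a t"
proof (rule ccontr)
  assume "\<not> 0 < shot a t"
  with nonneg[of t] t have "shot a t = 0"
    by simp
  obtain d where "0 < d" "d \<le> c"
    and d: "\<And>a' x. a \<le> a' \<Longrightarrow> 0 < x \<Longrightarrow> x \<le> d \<Longrightarrow> 0 < shot a' x"
    using shot_pos_near_zero[OF a] by blast
  have "0 < shot a (min d (t/2))"
    using d[OF order_refl] \<open>0 < d\<close> t by simp
  then have "shot a c < 0"
    using shot_neg_after_zero[of "min d (t/2)" t c a] \<open>shot a t = 0\<close> \<open>0 < d\<close> t
    by (simp add: min_less_iff_disj)
  then show False
    using nonneg[of c] c_pos by simp
qed

lemma shooting:
  assumes a0: "0 < a0" "a0 < A" and AM: "A * c \<le> M"
    and pos: "\<And>t. t \<in> {0<..c} \<Longrightarrow> 0 < shot a0 t"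
    and vanish: "\<exists>t\<in>{0<..c}. shot A t \<le> 0"
  obtains a1 where "a0 < a1" "emden_sol p h {0..c} (shot a1) (shot' a1)" "shot a1 c = 0"
    "\<And>t. t \<in> {0<..<c} \<Longrightarrow> 0 < shot a1 t"
proof -
  define S where "S = {a. a \<le> A \<and> (\<forall>t\<in>{0<..c}. 0 < shot a t)}"
  define a1 where "a1 = Sup S"
  have "a0 \<in> S" "bdd_above S"
    using a0 pos by (auto simp: S_def bdd_above_def)
  then have le_a1: "a \<le> a1" if "a \<in> S" for a
    using that by (simp add: a1_def cSup_upper)
  have "a1 \<le> A"
    using \<open>a0 \<in> S\<close> by (auto simp: a1_def S_def intro!: cSup_least)
  have larger: "\<exists>a\<in>S. b < a" if "0 < b" "b < A" "\<forall>t\<in>{0<..c}. 0 < shot b t" for b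
  proof -
    have "\<forall>\<^sub>F a in at_right b. b < a \<and> a < A \<and> (\<forall>t\<in>{0<..c}. 0 < shot a t)"
      using that by (intro eventually_conj eventually_at_right_less shot_pos_eventually
          order_tendstoD(2)[OF tendsto_ident_at]) auto
    then obtain a where "b < a" "a < A" "\<forall>t\<in>{0<..c}. 0 < shot a t"
      using eventually_happens'[OF trivial_limit_at_right_real] by blast
    then show ?thesis
      by (intro bexI[of _ a]) (auto simp: S_def)
  qed
  have "a0 < a1"
    using larger[OF a0] pos le_a1 by force
  have "S \<noteq> {}" "\<And>a t. a \<in> S \<Longrightarrow> t \<in> {0<..c} \<Longrightarrow> 0 < shot a t"
    using \<open>a0 \<in> S\<close> by (auto simp: S_def)
  then have nonneg: "0 \<le> shot a1 t" if "t \<in> {0..c}" for t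
    unfolding a1_def using shot_Sup_nonneg \<open>bdd_above S\<close> that by blast
  have interior: "0 < shot a1 t" if "t \<in> {0<..<c}" for t
    using shot_pos_of_nonneg[OF _ nonneg that] \<open>a0 < a1\<close> a0 by simp
  have "shot a1 c = 0"
  proof (rule ccontr)
    assume "shot a1 c \<noteq> 0"
    with nonneg[of c] c_pos have "\<forall>t\<in>{0<..c}. 0 < shot a1 t"
      using interior by (auto simp: less_eq_real_def)
    moreover have "a1 \<noteq> A"
      using vanish calculation by auto
    ultimately obtain a where "a \<in> S" "a1 < a"
      using larger[of a1] \<open>a0 < a1\<close> \<open>a1 \<le> A\<close> a0 by force
    then show False
      using le_a1 by force
  qed
  moreover have "emden_sol p h {0..c} (shot a1) (shot' a1)"
  proof (rule shot_emden_sol)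
    fix t assume t: "t \<in> {0..c}"
    have "a1 * t \<le> A * c"
      using t \<open>a1 \<le> A\<close> \<open>a0 < a1\<close> a0 by (intro mult_mono) auto
    then show "0 \<le> shot a1 t \<and> shot a1 t \<le> M"
      using nonneg[OF t] shot_le_slope[OF t, of a1] AM by simp
  qed
  ultimately show ?thesis
    using that \<open>a0 < a1\<close> interior by blast
qed

end

lemma large_slope_parameters:
  fixes p m H a0 :: real
  assumes p: "1 < p" and m: "0 < m" and H: "0 < H"
  obtains A s where "a0 < A" "0 < s" "s \<le> 1" "H * A powr (p - 1) * s powr (p + 1) \<le> 1/2"
    "8 * A < m * (A * s / 8) powr p"
proof -
  define k where "k = 1 / (2 * H)"
  have k: "0 < k"
    using H by (simp add: k_def)
  define s where "s = min 1 (min (m * k / (2 * 8 powr (p + 1))) (k / (\<bar>a0\<bar> + 1) powr (p - 1)))"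
  have s: "0 < s" "s \<le> 1" "s \<le> m * k / (2 * 8 powr (p + 1))" "s \<le> k / (\<bar>a0\<bar> + 1) powr (p - 1)"
    using m k by (simp_all add: s_def)
  define X where "X = k * s powr (- (p + 1))"
  have X: "0 < X" "k = X * s powr (p + 1)"
    using k s by (simp_all add: X_def mult.assoc flip: powr_add)
  define A where "A = X powr (1 / (p - 1))"
  have A: "0 < A" "X = A powr (p - 1)"
    using p X by (simp_all add: A_def powr_powr)
  have "0 < (\<bar>a0\<bar> + 1) powr (p - 1)"
    by simp
  then have "(\<bar>a0\<bar> + 1) powr (p - 1) \<le> k / s"
    using s(1,4) by (metis mult.commute pos_le_divide_eq)
  also have "k / s = k * s powr (- 1)"
    using s(1) by (simp add: powr_neg_one)
  also have "\<dots> \<le> X"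
    unfolding X_def using k s p by (intro mult_left_mono powr_mono') auto
  finally have "\<bar>a0\<bar> + 1 \<le> A"
    using powr_less_mono2[of "p - 1" A "\<bar>a0\<bar> + 1"] p A by (cases "A < \<bar>a0\<bar> + 1") auto
  then have "a0 < A"
    using abs_ge_self[of a0] by linarith
  moreover have "H * A powr (p - 1) * s powr (p + 1) \<le> 1/2"
    unfolding mult.assoc A(2)[symmetric] X(2)[symmetric] k_def using H by simp
  moreover have "8 * A < m * (A * s / 8) powr p"
  proof -
    have "2 \<le> m * k / (s * 8 powr (p + 1))"
      using s(1,3) by (simp add: field_simps)
    then have "2 * (8 * A) \<le> m * k / (s * 8 powr (p + 1)) * (8 * A)"
      using A by (intro mult_right_mono) auto
    also have "\<dots> = m * (A powr (p - 1) * A) * s powr p / 8 powr p"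
      unfolding X(2) A(2) powr_add using s(1) by (simp add: field_simps)
    also have "\<dots> = m * (A * s / 8) powr p"
      using A(1) s(1) powr_add[of A "p - 1" 1] by (simp add: powr_mult powr_divide)
    finally show ?thesis
      using A by simp
  qed
  ultimately show ?thesis
    using that s(1,2) by blast
qed

lemma emden_dirichlet_solution:
  fixes p c m H' A s :: real and h v v' :: "real \<Rightarrow> real"
  assumes p: "1 \<le> p" and c: "2 \<le> c"
    and h_cont: "continuous_on {0..c} h" and h_nonneg: "\<And>t. t \<in> {0..c} \<Longrightarrow> 0 \<le> h t"
    and m: "\<And>t. t \<in> {1..3/2} \<Longrightarrow> m \<le> h t" and H': "\<And>t. t \<in> {0..1} \<Longrightarrow> h t \<le> H'"
    and sol: "emden_sol p h {0..c} v v'" and v_0: "v 0 = 0"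
    and v_pos: "\<And>t. t \<in> {0<..c} \<Longrightarrow> 0 < v t"
    and A: "v' 0 < A" and s: "0 < s" "s \<le> 1"
    and small: "H' * A powr (p - 1) * s powr (p + 1) \<le> 1/2"
    and large: "8 * A < m * (A * s / 8) powr p"
  shows "\<exists>w1 w1'. emden_sol p h {0..c} w1 w1' \<and> w1 0 = 0 \<and> w1 c = 0 \<and>
           (\<forall>s. 0 < s \<and> s < c \<longrightarrow> w1 s > 0) \<and> w1' 0 > v' 0"
proof -
  have v_nonneg: "0 \<le> v t" if "t \<in> {0..c}" for t
    using v_pos[of t] v_0 that by (cases "t = 0") auto
  have v_le: "v t \<le> v' 0 * t" if "t \<in> {0..c}" for t
    by (rule emden_sol_le_slope[OF sol v_0 that h_nonneg v_nonneg])
  have "0 < v' 0"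
    using v_le[of 1] v_pos[of 1] c by simp
  obtain x where "x \<in> {0..c}" "\<And>t. t \<in> {0..c} \<Longrightarrow> h t \<le> h x"
    using continuous_attains_sup[OF _ _ h_cont] c by auto
  then interpret truncated_emden p c "A * c" "h x" h
    using p c h_cont h_nonneg \<open>0 < v' 0\<close> A by unfold_locales auto
  have "shot (v' 0) t = v t" if t: "t \<in> {0..c}" for t
  proof (rule shot_eq_emden_sol[OF sol v_0 _ t])
    fix t assume "t \<in> {0..c}"
    moreover have "v' 0 * t \<le> A * c"
      using calculation A \<open>0 < v' 0\<close> by (intro mult_mono) auto
    ultimately show "0 \<le> v t \<and> v t \<le> A * c"
      using v_nonneg v_le by force
  qed
  then have pos: "\<And>t. t \<in> {0<..c} \<Longrightarrow> 0 < shot (v' 0) t"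
    using v_pos by simp
  have "A * 2 \<le> A * c"
    using c A \<open>0 < v' 0\<close> by (intro mult_left_mono) auto
  then obtain t where "t \<in> {0<..2}" "shot A t \<le> 0"
    using shot_vanishes_for_large_slope[OF c m H' _ _ s small large] A \<open>0 < v' 0\<close> by auto
  then have vanish: "\<exists>t\<in>{0<..c}. shot A t \<le> 0"
    using c by (intro bexI[of _ t]) auto
  obtain a1 where "v' 0 < a1" "emden_sol p h {0..c} (shot a1) (shot' a1)"
    "shot a1 c = 0" "\<And>t. t \<in> {0<..<c} \<Longrightarrow> 0 < shot a1 t"
    using shooting[OF \<open>0 < v' 0\<close> A order_refl pos vanish] by blast
  then show ?thesis
    by (intro exI[of _ "shot a1"] exI[of _ "shot' a1"]) (auto simp: shot_0 shot'_0)
qed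

theorem lemma2p6:
  fixes p :: real and h w0 w0' :: "real \<Rightarrow> real"
  assumes "p > 1"
    and "continuous_on {0..} h"
    and "\<And>s. s > 0 \<Longrightarrow> h s > 0"
    and "emden_sol p h {0..} w0 w0'"
    and "w0 0 = 0"
    and "\<And>s. s > 0 \<Longrightarrow> w0 s > 0"
  shows "\<exists>C>0. \<forall>c\<ge>C. \<exists>w1 w1'. emden_sol p h {0..c} w1 w1' \<and>
           w1 0 = 0 \<and> w1 c = 0 \<and> (\<forall>s. 0 < s \<and> s < c \<longrightarrow> w1 s > 0) \<and>
           w1' 0 > w0' 0"
proof -
  have h_nonneg: "0 \<le> h t" if "0 \<le> t" for t
    using continuous_ge_on_closure[of "{0<..}" h t 0] assms(2,3) that by force
  obtain x where "x \<in> {1..3/2::real}" "\<And>t. t \<in> {1..3/2} \<Longrightarrow> h x \<le> h t"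
    using continuous_attains_inf[of "{1..3/2}" h] continuous_on_subset[OF assms(2)] by force
  then have m: "0 < h x" "\<And>t. t \<in> {1..3/2} \<Longrightarrow> h x \<le> h t"
    using assms(3) by auto
  obtain y where "y \<in> {0..1::real}" "\<And>t. t \<in> {0..1} \<Longrightarrow> h t \<le> h y"
    using continuous_attains_sup[of "{0..1}" h] continuous_on_subset[OF assms(2)] by force
  then have H': "0 < h y + 1" "\<And>t. t \<in> {0..1} \<Longrightarrow> h t \<le> h y + 1"
    using h_nonneg[of y] by force+
  obtain A s where As: "w0' 0 < A" "0 < s" "s \<le> 1" "(h y + 1) * A powr (p - 1) * s powr (p + 1) \<le> 1/2"
    "8 * A < h x * (A * s / 8) powr p"
    using large_slope_parameters[OF assms(1) m(1) H'(1)] by blast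
  have "\<exists>w1 w1'. emden_sol p h {0..c} w1 w1' \<and> w1 0 = 0 \<and> w1 c = 0 \<and>
      (\<forall>s. 0 < s \<and> s < c \<longrightarrow> w1 s > 0) \<and> w1' 0 > w0' 0" if c: "2 \<le> c" for c
  proof (rule emden_dirichlet_solution[where h = h and m = "h x" and H' = "h y + 1" and v = w0
        and v' = w0', OF _ c _ _ m(2) H'(2) _ assms(5) _ As])
    show "continuous_on {0..c} h"
      by (rule continuous_on_subset[OF assms(2)]) auto
    show "emden_sol p h {0..c} w0 w0'"
      by (rule emden_sol_subset[OF assms(4)]) auto
  qed (use assms(1,6) h_nonneg in auto)
  then show ?thesis
    by (intro exI[of _ 2]) auto
qed

end
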